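(* Consider the following single-beam millimeter-wave NOMA downlink model. Fix an integer $M\ge1$, parameters $\alpha,\phi,\lambda,R_{\mathcal{D}},\Delta>0$ and a beam direction $\bar\theta$. Let $\mathbf{a}(\theta)=\frac{1}{\sqrt{M}}(1,e^{-\mathrm{j}\pi\theta},\dots,e^{-\mathrm{j}\pi(M-1)\theta})^T$ and $\mathbf{p}=\mathbf{a}(\bar\theta)$. Conditioned on there being $K\ge2$ users in the sector $\mathcal{D}_\theta=\{(r,\theta):0\le r\le R_{\mathcal{D}},|\theta-\bar\theta|\le\Delta\}$, the users' polar positions $(r_k,\theta_k)$ are i.i.d. with density $\frac{\phi^2e^{-\phi r}r}{2\Delta\gamma(2,R_{\mathcal{D}}\phi)}$ w.r.t. $dr\,d\theta$ on $[0,R_{\mathcal{D}}]\times[\bar\theta-\Delta,\bar\theta+\Delta]$, and user $k$ has channel $\mathbf{h}_k=\sqrt{M}\frac{a_k\mathbf{a}(\theta_k)}{\sqrt{1+r_k^\alpha}}$ with $a_k$ i.i.d. $\mathcal{CN}(0,1)$ independent of the positions. Users are indexed so that $|\mathbf{h}_1^H\mathbf{p}|^2\le\dots\le|\mathbf{h}_K^H\mathbf{p}|^2$. Fix $1\le i<j\le K$, power coefficients $\beta_i\ge\beta_j\ge0$ with $\beta_i^2+\beta_j^2=1$, transmit SNR $\rho>0$, target rates $R_i,R_j>0$ and $\epsilon_i=2^{R_i}-1$, $\epsilon_j=2^{R_j}-1$. Define $\mathrm{SINR}_i=\frac{|\mathbf{h}_i^H\mathbf{p}|^2\beta_i^2}{|\mathbf{h}_i^H\mathbf{p}|^2\beta_j^2+1/\rho}$,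 $\mathrm{SINR}_{i\to j}=\frac{|\mathbf{h}_j^H\mathbf{p}|^2\beta_i^2}{|\mathbf{h}_j^H\mathbf{p}|^2\beta_j^2+1/\rho}$, $\mathrm{SINR}_j=\rho|\mathbf{h}_j^H\mathbf{p}|^2\beta_j^2$, and the conditional outage probabilities $\mathrm{P}^o_{i|K}=\mathrm{P}(\mathrm{SINR}_i<\epsilon_i\mid K)$ and $\mathrm{P}^o_{j|K}=1-\mathrm{P}(\mathrm{SINR}_{i\to j}>\epsilon_i,\ \mathrm{SINR}_j>\epsilon_j\mid K)$. If $\beta_i^2\le\beta_j^2\epsilon_i$ then $\mathrm{P}^o_{j|K}=1$. If $\beta_i^2>\beta_j^2\epsilon_i$, then $$\mathrm{P}^o_{j|K}=c_j\sum_{p=0}^{K-j}\binom{K-j}{p}(-1)^p\frac{F_{\pi(j)}^{j+p}(\eta_j)}{j+p},\qquad \eta_j=\max\left\{\frac{\epsilon_i/\rho}{\beta_i^2-\beta_j^2\epsilon_i},\frac{\epsilon_j}{\rho\beta_j^2}\right\},$$ and $$\mathrm{P}^o_{i|K}=c_i\sum_{p=0}^{K-i}\binom{K-i}{p}(-1)^p\frac{F_{\pi(j)}^{i+p}(\eta_i)}{i+p},\qquad \eta_i=\frac{\epsilon_i/\rho}{\beta_i^2-\beta_j^2\epsilon_i},$$ where $c_k=\frac{K!}{(k-1)!(K-k)!}$ and $F_{\pi(j)}(y)=\int_{\bar\theta-\Delta}^{\bar\theta+\Delta}\int_0^{R_{\mathcal{D}}}\Big(1-e^{-\frac{y(1+r^\alpha)}{F_M(\pi[\bar\theta-\theta])}}\Big)\frac{\phi^2e^{-\phi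 r}}{2\Delta\gamma(2,R_{\mathcal{D}}\phi)}r\,dr\,d\theta$.
   Context: $F_M(x)=\frac{\sin^2(Mx/2)}{M\sin^2(x/2)}$ is the Fejér kernel; $\gamma(s,x)=\int_0^xt^{s-1}e^{-t}dt$ is the lower incomplete gamma function; $\mathrm{j}=\sqrt{-1}$. $F_{\pi(j)}$ is the common CDF of an unordered effective channel gain $|\mathbf{h}_k^H\mathbf{p}|^2$. *)

theory Defs
  imports "HOL-Probability.Probability"
begin

definition lower_gamma :: "real \<Rightarrow> real \<Rightarrow> real" where
  "lower_gamma s x = (LBINT t=0..x. t powr (s - 1) * exp (- t))"

text \<open>Fejer kernel F_M(x) = sin^2(Mx/2) / (M sin^2(x/2)), with its removable
  singularity (value M) filled in where sin(x/2) = 0.\<close>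
definition fejer :: "nat \<Rightarrow> real \<Rightarrow> real" where
  "fejer M x = (if sin (x / 2) = 0 then real M
                else (sin (real M * x / 2))\<^sup>2 / (real M * (sin (x / 2))\<^sup>2))"

definition steer :: "nat \<Rightarrow> real \<Rightarrow> nat \<Rightarrow> complex" where
  "steer M \<theta> m = exp (- \<i> * complex_of_real (pi * real m * \<theta>)) / complex_of_real (sqrt (real M))"

definition chan :: "nat \<Rightarrow> real \<Rightarrow> real \<Rightarrow> real \<Rightarrow> complex \<Rightarrow> nat \<Rightarrow> complex" where
  "chan M \<alpha> r \<theta> a m = complex_of_real (sqrt (real M)) * a * steer M \<theta> m
                          / complex_of_real (sqrt (1 + r powr \<alpha>))"

definition herm :: "nat \<Rightarrow> (nat \<Rightarrow> complex) \<Rightarrow> (nat \<Rightarrow> complex) \<Rightarrow> complex" where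
  "herm M h p = (\<Sum>m<M. cnj (h m) * p m)"

definition gain :: "nat \<Rightarrow> real \<Rightarrow> real \<Rightarrow> real \<Rightarrow> real \<Rightarrow> complex \<Rightarrow> real" where
  "gain M \<alpha> \<theta>b r \<theta> a = (cmod (herm M (chan M \<alpha> r \<theta> a) (steer M \<theta>b)))\<^sup>2"

text \<open>k-th smallest (1-indexed) among g 0, ..., g (K-1).\<close>
definition ord_stat :: "nat \<Rightarrow> (nat \<Rightarrow> real) \<Rightarrow> nat \<Rightarrow> real" where
  "ord_stat K g k = sort (map g [0..<K]) ! (k - 1)"

text \<open>Common CDF F_pi of an unordered effective channel gain.\<close>
definition Fpi :: "nat \<Rightarrow> real \<Rightarrow> real \<Rightarrow> real \<Rightarrow> real \<Rightarrow> real \<Rightarrow> real \<Rightarrow> real" where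
  "Fpi M \<alpha> \<phi> RD \<Delta> \<theta>b y =
     (LBINT \<theta>=\<theta>b-\<Delta>..\<theta>b+\<Delta>. (LBINT r=0..RD.
        (1 - exp (- (y * (1 + r powr \<alpha>)) / fejer M (pi * (\<theta>b - \<theta>))))
        * (\<phi>\<^sup>2 * exp (- \<phi> * r) / (2 * \<Delta> * lower_gamma 2 (RD * \<phi>))) * r))"

text \<open>Joint density of (r_k, theta_k, a_k): position density times CN(0,1) density.\<close>
definition user_density :: "real \<Rightarrow> real \<Rightarrow> real \<Rightarrow> real \<Rightarrow> real \<times> real \<times> complex \<Rightarrow> ennreal" where
  "user_density \<phi> RD \<Delta> \<theta>b = (\<lambda>(r, \<theta>, z).
     ennreal (indicator ({0..RD} \<times> {\<theta>b-\<Delta>..\<theta>b+\<Delta>}) (r, \<theta>)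
        * (\<phi>\<^sup>2 * exp (- \<phi> * r) * r / (2 * \<Delta> * lower_gamma 2 (RD * \<phi>)))
        * (exp (- (cmod z)\<^sup>2) / pi)))"

definition coef :: "nat \<Rightarrow> nat \<Rightarrow> real" where
  "coef K k = fact K / (fact (k - 1) * fact (K - k))"

definition order_cdf_sum :: "nat \<Rightarrow> nat \<Rightarrow> real \<Rightarrow> real" where
  "order_cdf_sum K k F = coef K k * (\<Sum>p=0..K-k. real (K - k choose p) * (-1) ^ p * F ^ (k + p) / real (k + p))"

end

theory Submission
  imports Defs
begin

text \<open>
  The effective gain of a user at \<open>(r, \<theta>)\<close> with fading coefficient \<open>a\<close> is
  \<open>|a|^2 F_M(pi (\<theta>b - \<theta>)) / (1 + r^\<alpha>)\<close>: the inner product of two steering vectors is a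
  geometric sum whose squared modulus is the Fejer kernel. Given the position, \<open>|a|^2\<close> is
  exponential, so integrating its distribution function against the position density shows that
  the unordered gains are i.i.d. with distribution function \<open>F\<close> (= \<open>Fpi\<close>).

  The \<open>k\<close>-th smallest gain is at most \<open>y\<close> iff at least \<open>k\<close> of the \<open>K\<close> gains are, so its
  distribution function is the binomial tail \<open>\<Sum>m=k..K. (K choose m) F^m (1 - F)^(K - m)\<close>. This is
  the paper's closed form \<open>order_cdf_sum\<close>: both vanish at \<open>F = 0\<close> and have derivative
  \<open>c_k F^(k - 1) (1 - F)^(K - k)\<close>.

  Finally both outage events are threshold events for a single ordered gain: user \<open>j\<close> decodes
  both messages iff \<open>\<beta>i^2 > \<beta>j^2 \<epsilon>i\<close> and its gain exceeds \<open>\<eta>j\<close>, and in that case user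
  \<open>i\<close> is in outage iff its gain is below \<open>\<eta>i\<close>.
\<close>

lemma coef_eq_binomial:
  assumes "1 \<le> k" "k \<le> K"
  shows "coef K k = real (K choose k) * real k"
proof -
  have "(fact k :: real) = real k * fact (k - 1)"
    using assms by (simp add: fact_reduce)
  then show ?thesis
    using assms by (simp add: coef_def binomial_fact)
qed

lemma coef_Suc_eq_binomial:
  assumes "k < K"
  shows "coef K (Suc k) = real (K choose k) * real (K - k)"
proof -
  have "(fact (K - k) :: real) = real (K - k) * fact (K - Suc k)"
    using assms by (simp add: fact_reduce)
  then show ?thesis
    using assms by (simp add: coef_def binomial_fact)
qed

definition binomial_tail :: "nat \<Rightarrow> nat \<Rightarrow> real \<Rightarrow> real" where
  "binomial_tail K k p = (\<Sum>m=k..K. real (K choose m) * p ^ m * (1 - p) ^ (K - m))"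

lemma binomial_tail_has_derivative:
  assumes "1 \<le> k" "k \<le> K"
  shows "(binomial_tail K k has_real_derivative coef K k * p ^ (k - 1) * (1 - p) ^ (K - k)) (at p)"
  using assms
proof (induction "K - k" arbitrary: k)
  case 0
  then have "k = K"
    by simp
  then have "binomial_tail K k = (\<lambda>p. p ^ K)" "coef K k = real K"
    using coef_eq_binomial[OF 0(2,3)] by (auto simp: binomial_tail_def)
  then show ?case
    using DERIV_pow[of K p] \<open>k = K\<close> by simp
next
  case (Suc d)
  then have "k < K"
    by simp
  have split: "binomial_tail K k = (\<lambda>p. real (K choose k) * p ^ k * (1 - p) ^ (K - k) + binomial_tail K (Suc k) p)"
    using \<open>k < K\<close> by (intro ext) (simp add: binomial_tail_def sum.atLeast_Suc_atMost)
  have head: "((\<lambda>p. real (K choose k) * p ^ k * (1 - p) ^ (K - k)) has_real_derivative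
      real (K choose k) * (real k * p ^ (k - 1) * (1 - p) ^ (K - k) - real (K - k) * p ^ k * (1 - p) ^ (K - Suc k))) (at p)"
    by (auto intro!: derivative_eq_intros simp: algebra_simps)
  have tail: "(binomial_tail K (Suc k) has_real_derivative
      real (K choose k) * real (K - k) * p ^ k * (1 - p) ^ (K - Suc k)) (at p)"
    using Suc.hyps(1)[of "Suc k"] Suc.hyps(2) \<open>k < K\<close> coef_Suc_eq_binomial[OF \<open>k < K\<close>] by simp
  show ?case
    unfolding split using DERIV_add[OF head tail] coef_eq_binomial[OF Suc.prems]
    by (simp add: algebra_simps)
qed

lemma order_cdf_sum_has_derivative:
  assumes "1 \<le> k"
  shows "(order_cdf_sum K k has_real_derivative coef K k * p ^ (k - 1) * (1 - p) ^ (K - k)) (at p)"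
proof -
  define n where "n = K - k"
  have summand: "((\<lambda>p. real (n choose q) * (-1) ^ q * p ^ (k + q) / real (k + q)) has_real_derivative
      p ^ (k - 1) * (real (n choose q) * (- p) ^ q * 1 ^ (n - q))) (at p)" for q
  proof -
    have "real (k + q) \<noteq> 0" "p ^ (k + q - 1) = p ^ (k - 1) * p ^ q"
      using assms by (simp_all add: power_add[symmetric])
    then have "real (n choose q) * (-1) ^ q * (real (k + q) * p ^ (k + q - 1)) / real (k + q)
        = p ^ (k - 1) * (real (n choose q) * (- p) ^ q * 1 ^ (n - q))"
      by (simp add: power_minus[of p])
    then show ?thesis
      using DERIV_cdivide[OF DERIV_cmult[OF DERIV_pow[of "k + q" p]], of "real (n choose q) * (-1) ^ q" "real (k + q)"]
      by simp
  qed
  have "((\<lambda>p. \<Sum>q\<le>n. real (n choose q) * (-1) ^ q * p ^ (k + q) / real (k + q)) has_real_derivative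
      (\<Sum>q\<le>n. p ^ (k - 1) * (real (n choose q) * (- p) ^ q * 1 ^ (n - q)))) (at p)"
    by (intro DERIV_sum summand)
  also have "(\<Sum>q\<le>n. p ^ (k - 1) * (real (n choose q) * (- p) ^ q * 1 ^ (n - q))) = p ^ (k - 1) * (1 - p) ^ n"
    using binomial_ring[of "- p" 1 n] by (simp add: sum_distrib_left[symmetric])
  finally have "((\<lambda>p. \<Sum>q\<le>n. real (n choose q) * (-1) ^ q * p ^ (k + q) / real (k + q)) has_real_derivative
      p ^ (k - 1) * (1 - p) ^ n) (at p)" .
  then show ?thesis
    using DERIV_cmult[where c = "coef K k"] unfolding order_cdf_sum_def n_def
    by (simp add: atLeast0AtMost mult.assoc)
qed

lemma binomial_tail_eq_order_cdf_sum:
  assumes "1 \<le> k" "k \<le> K"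
  shows "binomial_tail K k p = order_cdf_sum K k p"
proof -
  have "\<forall>x. ((\<lambda>p. binomial_tail K k p - order_cdf_sum K k p) has_real_derivative 0) (at x)"
    using DERIV_diff[OF binomial_tail_has_derivative[OF assms] order_cdf_sum_has_derivative[OF assms(1), of K]]
    by simp
  then have "binomial_tail K k p - order_cdf_sum K k p = binomial_tail K k 0 - order_cdf_sum K k 0"
    by (rule DERIV_isconst_all)
  moreover have "binomial_tail K k 0 = 0" "order_cdf_sum K k 0 = 0"
    using assms by (auto simp: binomial_tail_def order_cdf_sum_def intro!: sum.neutral)
  ultimately show ?thesis
    by simp
qed

lemma sorted_nth_iff_length_filter:
  fixes s :: "'a::linorder list"
  assumes "sorted s" "1 \<le> k" "k \<le> length s"
    and down: "\<And>x x'. x \<le> x' \<Longrightarrow> P x' \<Longrightarrow> P x"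
  shows "P (s ! (k - 1)) \<longleftrightarrow> k \<le> length (filter P s)"
proof -
  let ?S = "{i. i < length s \<and> P (s ! i)}"
  have card: "length (filter P s) = card ?S"
    by (rule length_filter_conv_card)
  show ?thesis
  proof
    assume top: "P (s ! (k - 1))"
    have "P (s ! i)" if "i < k" for i
      using that assms(1-3) by (intro down[OF _ top] sorted_nth_mono) auto
    then have "{..<k} \<subseteq> ?S"
      using assms(3) by auto
    then show "k \<le> length (filter P s)"
      unfolding card using card_mono[of ?S "{..<k}"] by simp
  next
    assume k: "k \<le> length (filter P s)"
    show "P (s ! (k - 1))"
    proof (rule ccontr)
      assume bot: "\<not> P (s ! (k - 1))"
      have "i < k - 1" if "i < length s" "P (s ! i)" for i
        using that assms(1) down[OF sorted_nth_mono[of s "k - 1" i]] bot by force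
      then have "?S \<subseteq> {..<k - 1}"
        by auto
      then show False
        using k assms(2) unfolding card using card_mono[of "{..<k - 1}" ?S] by simp
    qed
  qed
qed

lemma ord_stat_iff_card:
  assumes "1 \<le> k" "k \<le> K"
    and down: "\<And>x x'. x \<le> x' \<Longrightarrow> P x' \<Longrightarrow> P x"
  shows "P (ord_stat K g k) \<longleftrightarrow> k \<le> card {l. l < K \<and> P (g l)}"
proof -
  have "P (ord_stat K g k) \<longleftrightarrow> k \<le> length (filter P (sort (map g [0..<K])))"
    unfolding ord_stat_def using assms by (intro sorted_nth_iff_length_filter) auto
  also have "length (filter P (sort (map g [0..<K]))) = card {l. l < K \<and> P (g l)}"
    by (simp add: filter_sort length_filter_conv_card cong: conj_cong)
  finally show ?thesis .
qed

lemma ord_stat_in_image: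
  assumes "1 \<le> k" "k \<le> K"
  shows "ord_stat K g k \<in> g ` {..<K}"
proof -
  have "ord_stat K g k \<in> set (sort (map g [0..<K]))"
    unfolding ord_stat_def using assms by (intro nth_mem) simp
  then show ?thesis
    by auto
qed

lemma sum_subsets_card_ge:
  fixes f :: "nat \<Rightarrow> real"
  assumes "k \<le> K"
  shows "(\<Sum>S | S \<subseteq> {..<K} \<and> k \<le> card S. f (card S)) = (\<Sum>m=k..K. real (K choose m) * f m)"
proof -
  have "{S. S \<subseteq> {..<K} \<and> k \<le> card S} = (\<Union>m\<in>{k..K}. {S. S \<subseteq> {..<K} \<and> card S = m})"
    using card_mono[of "{..<K}"] by force
  then have "(\<Sum>S | S \<subseteq> {..<K} \<and> k \<le> card S. f (card S))
      = (\<Sum>m=k..K. \<Sum>S | S \<subseteq> {..<K} \<and> card S = m. f (card S))"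
    by (simp, subst sum.UNION_disjoint) (auto intro: finite_subset[of _ "Pow {..<K}"])
  also have "\<dots> = (\<Sum>m=k..K. real (K choose m) * f m)"
    using n_subsets[of "{..<K}"] by (intro sum.cong) simp_all
  finally show ?thesis .
qed

lemma (in prob_space) prob_membership_pattern:
  fixes X :: "nat \<Rightarrow> 'a \<Rightarrow> real"
  assumes ind: "indep_vars (\<lambda>_. borel) X {..<K}"
    and A: "A \<in> sets borel"
    and p: "\<And>l. l < K \<Longrightarrow> prob {\<omega> \<in> space M. X l \<omega> \<in> A} = p"
    and "0 < K" "S \<subseteq> {..<K}"
  shows "prob {\<omega> \<in> space M. \<forall>l<K. X l \<omega> \<in> A \<longleftrightarrow> l \<in> S} = p ^ card S * (1 - p) ^ (K - card S)"
    and "{\<omega> \<in> space M. \<forall>l<K. X l \<omega> \<in> A \<longleftrightarrow> l \<in> S} \<in> events"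
proof -
  define B where "B l = (if l \<in> S then A else - A)" for l
  have meas: "X l \<in> borel_measurable M" if "l < K" for l
    using ind that unfolding indep_vars_def by auto
  have B: "B l \<in> sets borel" for l
    using A unfolding B_def by auto
  have B_iff: "X l \<omega> \<in> B l \<longleftrightarrow> (X l \<omega> \<in> A \<longleftrightarrow> l \<in> S)" for l \<omega>
    unfolding B_def by auto
  have pattern: "{\<omega> \<in> space M. \<forall>l<K. X l \<omega> \<in> A \<longleftrightarrow> l \<in> S} = (\<Inter>l<K. X l -` B l \<inter> space M)"
    unfolding B_iff[symmetric] using \<open>0 < K\<close> by auto
  have prob_B: "prob (X l -` B l \<inter> space M) = (if l \<in> S then p else 1 - p)" if "l < K" for l
  proof -
    have "{\<omega> \<in> space M. X l \<omega> \<in> A} \<in> events"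
      using measurable_sets[OF meas[OF that] A] by (simp add: vimage_def Int_def conj_commute)
    moreover have "X l -` (- A) \<inter> space M = space M - {\<omega> \<in> space M. X l \<omega> \<in> A}"
      by auto
    ultimately show ?thesis
      using p[OF that] prob_compl unfolding B_def by (auto simp: vimage_def Int_def conj_commute)
  qed
  have "prob (\<Inter>l<K. X l -` B l \<inter> space M) = (\<Prod>l<K. prob (X l -` B l \<inter> space M))"
    using B \<open>0 < K\<close> by (intro indep_varsD_finite[OF ind]) auto
  also have "\<dots> = (\<Prod>l<K. if l \<in> S then p else 1 - p)"
    using prob_B by simp
  also have "\<dots> = p ^ card S * (1 - p) ^ (K - card S)"
    using \<open>S \<subseteq> {..<K}\<close>
    by (simp add: prod.If_cases Int_absorb1 card_Diff_subset finite_subset Diff_eq[symmetric])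
  finally show "prob {\<omega> \<in> space M. \<forall>l<K. X l \<omega> \<in> A \<longleftrightarrow> l \<in> S} = p ^ card S * (1 - p) ^ (K - card S)"
    unfolding pattern .
  show "{\<omega> \<in> space M. \<forall>l<K. X l \<omega> \<in> A \<longleftrightarrow> l \<in> S} \<in> events"
    unfolding pattern using meas B \<open>0 < K\<close> by (intro sets.finite_INT measurable_sets) auto
qed

lemma (in prob_space) prob_card_ge_eq_binomial_tail:
  fixes X :: "nat \<Rightarrow> 'a \<Rightarrow> real"
  assumes ind: "indep_vars (\<lambda>_. borel) X {..<K}"
    and A: "A \<in> sets borel"
    and p: "\<And>l. l < K \<Longrightarrow> prob {\<omega> \<in> space M. X l \<omega> \<in> A} = p"
    and "k \<le> K" "0 < K"
  shows "prob {\<omega> \<in> space M. k \<le> card {l. l < K \<and> X l \<omega> \<in> A}} = binomial_tail K k p"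
    and "{\<omega> \<in> space M. k \<le> card {l. l < K \<and> X l \<omega> \<in> A}} \<in> events"
proof -
  define \<S> where "\<S> = {S. S \<subseteq> {..<K} \<and> k \<le> card S}"
  define E where "E S = {\<omega> \<in> space M. \<forall>l<K. X l \<omega> \<in> A \<longleftrightarrow> l \<in> S}" for S
  note prob_E = prob_membership_pattern[OF ind A p \<open>0 < K\<close>, folded E_def]
  have fin: "finite \<S>"
    unfolding \<S>_def by (auto intro: finite_subset[of _ "Pow {..<K}"])
  have event: "{\<omega> \<in> space M. k \<le> card {l. l < K \<and> X l \<omega> \<in> A}} = (\<Union>S\<in>\<S>. E S)"
  proof (intro set_eqI iffI)
    fix \<omega> assume "\<omega> \<in> {\<omega> \<in> space M. k \<le> card {l. l < K \<and> X l \<omega> \<in> A}}"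
    then have "{l. l < K \<and> X l \<omega> \<in> A} \<in> \<S>" "\<omega> \<in> E {l. l < K \<and> X l \<omega> \<in> A}"
      unfolding \<S>_def E_def by auto
    then show "\<omega> \<in> (\<Union>S\<in>\<S>. E S)"
      by blast
  next
    fix \<omega> assume "\<omega> \<in> (\<Union>S\<in>\<S>. E S)"
    then obtain S where "S \<in> \<S>" "\<omega> \<in> E S"
      by auto
    moreover from this have "{l. l < K \<and> X l \<omega> \<in> A} = S"
      unfolding \<S>_def E_def by auto
    ultimately show "\<omega> \<in> {\<omega> \<in> space M. k \<le> card {l. l < K \<and> X l \<omega> \<in> A}}"
      unfolding \<S>_def E_def by auto
  qed
  have "disjoint_family_on E \<S>"
    unfolding disjoint_family_on_def \<S>_def E_def by auto
  then have "prob {\<omega> \<in> space M. k \<le> card {l. l < K \<and> X l \<omega> \<in> A}} = (\<Sum>S\<in>\<S>. prob (E S))"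
    unfolding event using prob_E(2) fin by (intro finite_measure_finite_Union) (auto simp: \<S>_def)
  also have "\<dots> = (\<Sum>S\<in>\<S>. p ^ card S * (1 - p) ^ (K - card S))"
    unfolding \<S>_def by (intro sum.cong) (auto simp: prob_E(1))
  also have "\<dots> = binomial_tail K k p"
    unfolding \<S>_def binomial_tail_def
    using sum_subsets_card_ge[OF \<open>k \<le> K\<close>, of "\<lambda>m. p ^ m * (1 - p) ^ (K - m)"]
    by (simp add: mult.assoc)
  finally show "prob {\<omega> \<in> space M. k \<le> card {l. l < K \<and> X l \<omega> \<in> A}} = binomial_tail K k p" .
  show "{\<omega> \<in> space M. k \<le> card {l. l < K \<and> X l \<omega> \<in> A}} \<in> events"
    unfolding event using prob_E(2) fin by (intro sets.finite_UN) (auto simp: \<S>_def)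
qed

lemma (in prob_space) prob_ord_stat_in_down_closed:
  fixes X :: "nat \<Rightarrow> 'a \<Rightarrow> real"
  assumes ind: "indep_vars (\<lambda>_. borel) X {..<K}"
    and A: "A \<in> sets borel" and down: "\<And>x x'. x \<le> x' \<Longrightarrow> x' \<in> A \<Longrightarrow> x \<in> A"
    and p: "\<And>l. l < K \<Longrightarrow> prob {\<omega> \<in> space M. X l \<omega> \<in> A} = p"
    and k: "1 \<le> k" "k \<le> K"
  shows "prob {\<omega> \<in> space M. ord_stat K (\<lambda>l. X l \<omega>) k \<in> A} = order_cdf_sum K k p"
    and "{\<omega> \<in> space M. ord_stat K (\<lambda>l. X l \<omega>) k \<in> A} \<in> events"
proof -
  have event: "{\<omega> \<in> space M. ord_stat K (\<lambda>l. X l \<omega>) k \<in> A}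
      = {\<omega> \<in> space M. k \<le> card {l. l < K \<and> X l \<omega> \<in> A}}"
  proof -
    have "ord_stat K g k \<in> A \<longleftrightarrow> k \<le> card {l. l < K \<and> g l \<in> A}" for g
      by (rule ord_stat_iff_card[OF k]) (rule down)
    then show ?thesis
      by simp
  qed
  show "prob {\<omega> \<in> space M. ord_stat K (\<lambda>l. X l \<omega>) k \<in> A} = order_cdf_sum K k p"
    unfolding event binomial_tail_eq_order_cdf_sum[OF k, symmetric]
    using k by (intro prob_card_ge_eq_binomial_tail(1)[OF ind A p]) auto
  show "{\<omega> \<in> space M. ord_stat K (\<lambda>l. X l \<omega>) k \<in> A} \<in> events"
    unfolding event using k by (intro prob_card_ge_eq_binomial_tail(2)[OF ind A p]) auto
qed

lemma cmod_exp_i_minus_one_sq: "(cmod (exp (\<i> * complex_of_real t) - 1))\<^sup>2 = 4 * (sin (t / 2))\<^sup>2"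
proof -
  have "exp (\<i> * complex_of_real t) = Complex (cos t) (sin t)"
    by (simp add: exp_eq_polar cis.ctr mult.commute)
  then have "(cmod (exp (\<i> * complex_of_real t) - 1))\<^sup>2 = (cos t - 1)\<^sup>2 + (sin t)\<^sup>2"
    by (simp add: cmod_power2)
  also have "\<dots> = 2 - 2 * cos t"
    by (simp add: power2_diff sin_squared_eq algebra_simps)
  also have "cos t = 1 - 2 * (sin (t / 2))\<^sup>2"
    using cos_double_sin[of "t / 2"] by simp
  finally show ?thesis
    by simp
qed

lemma cmod_sum_exp_i_sq_eq_fejer:
  assumes "M \<ge> 1"
  shows "(cmod (\<Sum>m<M. exp (\<i> * complex_of_real (real m * x))))\<^sup>2 = real M * fejer M x"
proof (cases "sin (x / 2) = 0")
  case True
  then obtain n :: int where "x = 2 * pi * of_int n"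
    using sin_zero_iff_int2[of "x / 2"] by auto
  then have "exp (\<i> * complex_of_real (real m * x)) = 1" for m
    using exp_integer_2pi[of "of_int (int m * n)"] by (simp add: Ints_of_int mult_ac)
  then show ?thesis
    using True by (simp add: fejer_def power2_eq_square)
next
  case False
  define w where "w = exp (\<i> * complex_of_real x)"
  have "w \<noteq> 1"
    using cmod_exp_i_minus_one_sq[of x] False unfolding w_def by auto
  have power: "exp (\<i> * complex_of_real (real m * x)) = w ^ m" for m
    unfolding w_def by (simp add: exp_of_nat_mult[symmetric] mult_ac)
  have "(\<Sum>m<M. exp (\<i> * complex_of_real (real m * x))) = (w ^ M - 1) / (w - 1)"
    unfolding power using \<open>w \<noteq> 1\<close> by (simp add: geometric_sum)
  then have "(cmod (\<Sum>m<M. exp (\<i> * complex_of_real (real m * x))))\<^sup>2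
      = (cmod (w ^ M - 1))\<^sup>2 / (cmod (w - 1))\<^sup>2"
    by (simp add: norm_divide power_divide)
  also have "w ^ M = exp (\<i> * complex_of_real (real M * x))"
    using power[of M] by simp
  also have "(cmod (exp (\<i> * complex_of_real (real M * x)) - 1))\<^sup>2 / (cmod (w - 1))\<^sup>2
      = 4 * (sin (real M * x / 2))\<^sup>2 / (4 * (sin (x / 2))\<^sup>2)"
    unfolding w_def cmod_exp_i_minus_one_sq ..
  finally show ?thesis
    using False assms by (simp add: fejer_def)
qed

lemma fejer_minus: "fejer M (- x) = fejer M x"
  unfolding fejer_def by (simp add: power2_eq_square)

lemma fejer_nonneg: "fejer M x \<ge> 0"
  unfolding fejer_def by auto

lemma gain_eq_fejer:
  assumes "M \<ge> 1"
  shows "gain M \<alpha> \<theta>b r \<theta> z = (cmod z)\<^sup>2 * fejer M (pi * (\<theta>b - \<theta>)) / (1 + r powr \<alpha>)"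
proof -
  define q where "q = sqrt (real M) * sqrt (1 + r powr \<alpha>)"
  define x where "x = pi * (\<theta> - \<theta>b)"
  have "q > 0" "q\<^sup>2 = real M * (1 + r powr \<alpha>)"
    unfolding q_def using assms by (simp_all add: add_pos_nonneg power_mult_distrib)
  have summand: "cnj (chan M \<alpha> r \<theta> z m) * steer M \<theta>b m
      = cnj z / complex_of_real q * exp (\<i> * complex_of_real (real m * x))" for m
  proof -
    have "cnj (exp (- \<i> * complex_of_real (pi * real m * \<theta>))) * exp (- \<i> * complex_of_real (pi * real m * \<theta>b))
        = exp (\<i> * complex_of_real (real m * x))"
      unfolding x_def by (simp add: exp_cnj exp_add[symmetric] algebra_simps)
    then show ?thesis
      unfolding chan_def steer_def q_def using assms by (simp add: field_simps add_pos_nonneg)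
  qed
  have "herm M (chan M \<alpha> r \<theta> z) (steer M \<theta>b)
      = cnj z / complex_of_real q * (\<Sum>m<M. exp (\<i> * complex_of_real (real m * x)))"
    unfolding herm_def summand by (simp add: sum_distrib_left)
  then have "gain M \<alpha> \<theta>b r \<theta> z = (cmod z)\<^sup>2 / q\<^sup>2 * (real M * fejer M x)"
    unfolding gain_def using \<open>q > 0\<close> cmod_sum_exp_i_sq_eq_fejer[OF assms, of x]
    by (simp add: norm_mult norm_divide power_mult_distrib power_divide)
  also have "fejer M x = fejer M (pi * (\<theta>b - \<theta>))"
    unfolding x_def using fejer_minus[of M "pi * (\<theta>b - \<theta>)"] by (simp add: algebra_simps)
  finally show ?thesis
    unfolding \<open>q\<^sup>2 = real M * (1 + r powr \<alpha>)\<close> using assms by simp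
qed

lemma fejer_measurable[measurable]: "fejer M \<in> borel_measurable borel"
  unfolding fejer_def by measurable

lemma countable_fejer_zeros:
  assumes "M \<ge> 1"
  shows "countable {x. fejer M x = 0}"
proof (rule countable_subset)
  show "{x. fejer M x = 0} \<subseteq> range (\<lambda>n::int. 2 * pi * of_int n / real M)"
  proof
    fix x assume "x \<in> {x. fejer M x = 0}"
    then have "sin (real M * x / 2) = 0"
      using assms unfolding fejer_def by (auto split: if_splits)
    then obtain n :: int where "real M * x / 2 = of_int n * pi"
      using sin_zero_iff_int2 by auto
    then show "x \<in> range (\<lambda>n::int. 2 * pi * of_int n / real M)"
      using assms by (intro range_eqI[of _ _ n]) (simp add: field_simps)
  qed
qed simp

lemma gain_measurable[measurable]:
  assumes "M \<ge> 1"
  shows "(\<lambda>(r, \<theta>, z). gain M \<alpha> \<theta>b r \<theta> z) \<in> borel_measurable (lborel \<Otimes>\<^sub>M lborel \<Otimes>\<^sub>M lborel)"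
  unfolding gain_eq_fejer[OF assms] by measurable

lemma lower_gamma_2:
  assumes "x > 0"
  shows "lower_gamma 2 x = 1 - (1 + x) * exp (- x)"
proof -
  have "lower_gamma 2 x = (LBINT t=ereal 0..ereal x. t * exp (- t))"
    unfolding lower_gamma_def zero_ereal_def[symmetric]
    by (rule interval_integral_cong) (use assms in \<open>auto simp: einterval_def\<close>)
  also have "\<dots> = (- (1 + x) * exp (- x)) - (- (1 + 0) * exp (- 0))"
  proof (rule interval_integral_FTC_finite)
    show "continuous_on {min 0 x..max 0 x} (\<lambda>t. t * exp (- t))"
      by (intro continuous_intros)
    fix t
    have "((\<lambda>t. - (1 + t) * exp (- t)) has_real_derivative t * exp (- t)) (at t)"
      by (auto intro!: derivative_eq_intros simp: algebra_simps)
    then show "((\<lambda>t. - (1 + t) * exp (- t)) has_vector_derivative t * exp (- t)) (at t within {min 0 x..max 0 x})"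
      unfolding has_real_derivative_iff_has_vector_derivative by (rule has_vector_derivative_at_within)
  qed
  finally show ?thesis by (simp add: algebra_simps)
qed

lemma lower_gamma_2_pos:
  assumes "x > 0"
  shows "lower_gamma 2 x > 0"
proof -
  have "1 + x + x\<^sup>2 / 2 \<le> exp x" "x\<^sup>2 / 2 > 0"
    using exp_lower_Taylor_quadratic[of x] assms by simp_all
  then have "1 + x < exp x"
    by linarith
  then have "(1 + x) * exp (- x) < 1"
    by (simp add: exp_minus field_simps)
  then show ?thesis
    using lower_gamma_2[OF assms] by simp
qed

lemma emeasure_norm_sq_le:
  assumes "t \<ge> 0"
  shows "emeasure lborel {z::complex. (cmod z)\<^sup>2 \<le> t} = ennreal (pi * t)"
proof -
  have "{z::complex. (cmod z)\<^sup>2 \<le> t} = cball 0 (sqrt t)"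
  proof (intro set_eqI)
    fix z :: complex
    show "z \<in> {z. (cmod z)\<^sup>2 \<le> t} \<longleftrightarrow> z \<in> cball 0 (sqrt t)"
      using real_sqrt_le_iff[of "(cmod z)\<^sup>2" t] by (simp only: mem_Collect_eq mem_cball_0 real_sqrt_abs abs_norm_cancel)
  qed
  then show ?thesis
    using emeasure_cball[of "sqrt t" "0::complex"] assms by (simp add: unit_ball_vol_2)
qed

lemma exp_indicator_layer_cake:
  assumes "s \<le> t"
  shows "ennreal (exp (- s)) = ennreal (exp (- t)) + (\<integral>\<^sup>+u. ennreal (exp (- u)) * indicator {s..t} u \<partial>lborel)"
proof -
  have "(\<integral>\<^sup>+u. ennreal (exp (- u)) * indicator {s..t} u \<partial>lborel) = ennreal ((- exp (- t)) - (- exp (- s)))"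
    by (rule nn_integral_FTC_Icc) (auto intro!: derivative_eq_intros assms)
  moreover have "exp (- t) \<le> exp (- s)"
    using assms by simp
  ultimately show ?thesis
    by (simp add: ennreal_plus[symmetric] del: ennreal_plus)
qed

lemma one_plus_times_exp_minus_le: "(1 + t) * exp (- t) \<le> (1::real)"
  using exp_ge_add_one_self[of t] by (simp add: exp_minus field_simps)

lemma nn_integral_exp_norm_sq_layers:
  assumes t: "t \<ge> 0"
  shows "(\<integral>\<^sup>+z. \<integral>\<^sup>+u. ennreal (exp (- u)) * indicator {(cmod z)\<^sup>2..t} u \<partial>lborel \<partial>(lborel::complex measure))
      = ennreal (pi * (1 - exp (- t) - t * exp (- t)))"
proof -
  let ?F = "\<lambda>u z. ennreal (exp (- u)) * indicator {(cmod z)\<^sup>2..t} u"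
  have nonneg: "0 \<le> 1 - exp (- t) - t * exp (- t)"
    using one_plus_times_exp_minus_le[of t] by (simp add: algebra_simps)
  have "(\<integral>\<^sup>+z. \<integral>\<^sup>+u. ?F u z \<partial>lborel \<partial>(lborel::complex measure))
      = (\<integral>\<^sup>+u. \<integral>\<^sup>+z. ?F u z \<partial>(lborel::complex measure) \<partial>lborel)"
    by (rule lborel_pair.Fubini') (unfold indicator_def atLeastAtMost_iff, measurable)
  also have "\<dots> = (\<integral>\<^sup>+u. ennreal pi * (ennreal (u ^ 1 * exp (- u)) * indicator {0..t} u) \<partial>lborel)"
  proof (rule nn_integral_cong)
    fix u :: real
    have "?F u z = ennreal (exp (- u)) * indicator {0..t} u * indicator {z. (cmod z)\<^sup>2 \<le> u} z" for z
      by (auto simp: indicator_def dest: order_trans[OF zero_le_power2])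
    then show "(\<integral>\<^sup>+z. ?F u z \<partial>lborel) = ennreal pi * (ennreal (u ^ 1 * exp (- u)) * indicator {0..t} u)"
      by (cases "0 \<le> u \<and> u \<le> t")
        (auto simp: nn_integral_cmult_indicator emeasure_norm_sq_le ennreal_mult'[symmetric] mult_ac)
  qed
  also have "\<dots> = ennreal pi * (\<integral>\<^sup>+u. ennreal (u ^ 1 * exp (- u)) * indicator {0..t} u \<partial>lborel)"
    by (rule nn_integral_cmult) measurable
  also have "(\<integral>\<^sup>+u. ennreal (u ^ 1 * exp (- u)) * indicator {0..t} u \<partial>lborel)
      = (1 - (\<Sum>n\<le>1. (t ^ n * exp (- t)) / fact n)) * fact 1"
    by (rule nn_intergal_power_times_exp_Icc[OF t])
  also have "(1 - (\<Sum>n\<le>1. (t ^ n * exp (- t)) / fact n)) * fact 1 = ennreal (1 - exp (- t) - t * exp (- t))"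
    by (simp add: diff_diff_eq)
  finally show ?thesis
    using nonneg by (simp add: ennreal_mult'[symmetric])
qed

lemma nn_integral_exp_norm_sq_le:
  assumes t: "t \<ge> 0"
  shows "(\<integral>\<^sup>+z. ennreal (exp (- (cmod z)\<^sup>2)) * indicator {z. (cmod z)\<^sup>2 \<le> t} z \<partial>(lborel::complex measure))
      = ennreal (pi * (1 - exp (- t)))"
proof -
  let ?D = "{z::complex. (cmod z)\<^sup>2 \<le> t}"
  have nonneg: "0 \<le> 1 - exp (- t) - t * exp (- t)"
    using one_plus_times_exp_minus_le[of t] by (simp add: algebra_simps)
  let ?F = "\<lambda>u z. ennreal (exp (- u)) * indicator {(cmod z)\<^sup>2..t} u"
  have "(\<integral>\<^sup>+z. ennreal (exp (- (cmod z)\<^sup>2)) * indicator ?D z \<partial>lborel)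
      = (\<integral>\<^sup>+z. ennreal (exp (- t)) * indicator ?D z + (\<integral>\<^sup>+u. ?F u z \<partial>lborel) \<partial>lborel)"
  proof (intro nn_integral_cong)
    fix z :: complex
    show "ennreal (exp (- (cmod z)\<^sup>2)) * indicator ?D z
        = ennreal (exp (- t)) * indicator ?D z + (\<integral>\<^sup>+u. ?F u z \<partial>lborel)"
      by (cases "(cmod z)\<^sup>2 \<le> t") (simp_all add: exp_indicator_layer_cake)
  qed
  also have "\<dots> = ennreal (exp (- t)) * emeasure lborel ?D + (\<integral>\<^sup>+z. (\<integral>\<^sup>+u. ?F u z \<partial>lborel) \<partial>lborel)"
  proof (subst nn_integral_add)
    have "(\<lambda>(z, u). ?F u z) \<in> borel_measurable ((lborel::complex measure) \<Otimes>\<^sub>M lborel)"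
      unfolding indicator_def atLeastAtMost_iff by measurable
    from lborel.borel_measurable_nn_integral_fst[OF this]
    show "(\<lambda>z::complex. \<integral>\<^sup>+u. ?F u z \<partial>lborel) \<in> borel_measurable lborel"
      by simp
  qed (auto intro: nn_integral_cmult_indicator)
  also have "\<dots> = ennreal (exp (- t) * (pi * t) + pi * (1 - exp (- t) - t * exp (- t)))"
    using t nn_integral_exp_norm_sq_layers[OF t] nonneg
    by (simp add: emeasure_norm_sq_le ennreal_mult'[symmetric] ennreal_plus[symmetric] del: ennreal_plus)
  finally show ?thesis
    by (simp add: algebra_simps)
qed

text \<open>Any \<open>A\<close> between \<open>{..<y}\<close> and \<open>{..y}\<close> gives the same value, since the two events differ only
  on a circle; this treats the outage events with \<open><\<close> and with \<open>\<le>\<close> at once.\<close>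
lemma nn_integral_cn_density_norm_sq_scaled:
  assumes c: "c > 0" and y: "y \<ge> 0" and A: "{..<y} \<subseteq> A" "A \<subseteq> {..y}"
  shows "(\<integral>\<^sup>+z. ennreal (exp (- (cmod z)\<^sup>2) / pi) * indicator {z. (cmod z)\<^sup>2 * c \<in> A} z \<partial>lborel)
      = ennreal (1 - exp (- (y / c)))"
proof -
  define t where "t = y / c"
  have t: "t \<ge> 0"
    unfolding t_def using c y by simp
  have "sphere (0::complex) (sqrt t) \<in> null_sets lborel"
    using negligible_sphere[of "0::complex" "sqrt t"]
    by (auto simp: null_sets_completion_iff negligible_iff_null_sets negligible_convex_frontier)
  then have "AE z in lborel. z \<notin> sphere (0::complex) (sqrt t)"
    by (rule AE_not_in)
  then have ae: "AE z in lborel. indicator {z. (cmod z)\<^sup>2 * c \<in> A} z = (indicator {z. (cmod z)\<^sup>2 \<le> t} z :: ennreal)"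
  proof (rule AE_mp, intro AE_I2 impI)
    fix z :: complex
    assume "z \<notin> sphere 0 (sqrt t)"
    then have "(cmod z)\<^sup>2 \<noteq> t"
      using t by auto
    then have "(cmod z)\<^sup>2 * c \<in> A \<longleftrightarrow> (cmod z)\<^sup>2 \<le> t"
      using A c unfolding t_def by (auto simp: field_simps subset_eq)
    then show "indicator {z. (cmod z)\<^sup>2 * c \<in> A} z = (indicator {z. (cmod z)\<^sup>2 \<le> t} z :: ennreal)"
      by (simp add: indicator_def)
  qed
  have split: "ennreal (exp (- (cmod z)\<^sup>2) / pi) = ennreal (exp (- (cmod z)\<^sup>2)) * ennreal (1 / pi)" for z :: complex
    by (simp add: ennreal_mult'[symmetric])
  have "(\<integral>\<^sup>+z. ennreal (exp (- (cmod z)\<^sup>2) / pi) * indicator {z. (cmod z)\<^sup>2 * c \<in> A} z \<partial>lborel)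
      = (\<integral>\<^sup>+z. ennreal (exp (- (cmod z)\<^sup>2)) * indicator {z. (cmod z)\<^sup>2 \<le> t} z * ennreal (1 / pi) \<partial>lborel)"
    by (intro nn_integral_cong_AE eventually_mono[OF ae]) (simp add: split mult_ac)
  also have "\<dots> = ennreal (pi * (1 - exp (- t))) * ennreal (1 / pi)"
    by (simp add: nn_integral_multc nn_integral_exp_norm_sq_le[OF t])
  also have "\<dots> = ennreal (1 - exp (- t))"
    using t by (simp add: ennreal_mult'[symmetric])
  finally show ?thesis
    unfolding t_def .
qed

lemma nn_integral_eq_interval_integral_bounded:
  fixes f :: "real \<Rightarrow> real"
  assumes "a \<le> b" and f: "f \<in> borel_measurable borel"
    and bounds: "\<And>x. x \<in> {a..b} \<Longrightarrow> 0 \<le> f x \<and> f x \<le> C"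
  shows "(\<integral>\<^sup>+x. ennreal (indicator {a..b} x * f x) \<partial>lborel) = ennreal (LBINT x=a..b. f x)"
    and "0 \<le> (LBINT x=a..b. f x)"
proof -
  have "integrable lborel (\<lambda>x. indicator {a..b} x *\<^sub>R f x)"
    using \<open>a \<le> b\<close> f bounds by (intro integrableI_bounded_set_indicator[where B = C]) auto
  then have int: "integrable lborel (\<lambda>x. indicator {a..b} x * f x)"
    by simp
  have nonneg: "AE x in lborel. 0 \<le> indicator {a..b} x * f x"
    using bounds by (auto simp: indicator_def)
  have eq: "(LBINT x=a..b. f x) = (\<integral>x. indicator {a..b} x * f x \<partial>lborel)"
    using \<open>a \<le> b\<close> by (simp add: interval_integral_Icc set_lebesgue_integral_def)
  show "(\<integral>\<^sup>+x. ennreal (indicator {a..b} x * f x) \<partial>lborel) = ennreal (LBINT x=a..b. f x)"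
    unfolding eq by (rule nn_integral_eq_integral[OF int nonneg])
  show "0 \<le> (LBINT x=a..b. f x)"
    unfolding eq using nonneg by (rule integral_nonneg_AE)
qed

definition Fpi_integrand :: "nat \<Rightarrow> real \<Rightarrow> real \<Rightarrow> real \<Rightarrow> real \<Rightarrow> real \<Rightarrow> real \<Rightarrow> real \<Rightarrow> real \<Rightarrow> real" where
  "Fpi_integrand M \<alpha> \<phi> RD \<Delta> \<theta>b y \<theta> r =
     (1 - exp (- (y * (1 + r powr \<alpha>)) / fejer M (pi * (\<theta>b - \<theta>))))
        * (\<phi>\<^sup>2 * exp (- \<phi> * r) / (2 * \<Delta> * lower_gamma 2 (RD * \<phi>))) * r"

lemma Fpi_integrand_measurable[measurable]:
  "(\<lambda>(\<theta>, r). Fpi_integrand M \<alpha> \<phi> RD \<Delta> \<theta>b y \<theta> r) \<in> borel_measurable (lborel \<Otimes>\<^sub>M lborel)"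
  unfolding Fpi_integrand_def by measurable

lemma Fpi_integrand_bounds:
  assumes "y \<ge> 0" "\<phi> > 0" "\<Delta> > 0" "RD > 0" "r \<in> {0..RD}"
  shows "0 \<le> Fpi_integrand M \<alpha> \<phi> RD \<Delta> \<theta>b y \<theta> r \<and>
         Fpi_integrand M \<alpha> \<phi> RD \<Delta> \<theta>b y \<theta> r \<le> \<phi>\<^sup>2 / (2 * \<Delta> * lower_gamma 2 (RD * \<phi>)) * RD"
proof -
  let ?g = "lower_gamma 2 (RD * \<phi>)"
  let ?e = "1 - exp (- (y * (1 + r powr \<alpha>)) / fejer M (pi * (\<theta>b - \<theta>)))"
  have "?g > 0"
    using assms by (intro lower_gamma_2_pos) simp
  have "- (y * (1 + r powr \<alpha>)) / fejer M (pi * (\<theta>b - \<theta>)) \<le> 0"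
    using assms fejer_nonneg[of M] by (intro divide_nonpos_nonneg) (auto intro: add_nonneg_nonneg)
  then have e: "0 \<le> ?e" "?e \<le> 1"
    by simp_all
  have d: "0 \<le> \<phi>\<^sup>2 * exp (- \<phi> * r) / (2 * \<Delta> * ?g)" "\<phi>\<^sup>2 * exp (- \<phi> * r) / (2 * \<Delta> * ?g) \<le> \<phi>\<^sup>2 / (2 * \<Delta> * ?g)"
    using \<open>?g > 0\<close> assms by (auto intro!: divide_right_mono mult_left_le)
  have eq: "Fpi_integrand M \<alpha> \<phi> RD \<Delta> \<theta>b y \<theta> r = ?e * (\<phi>\<^sup>2 * exp (- \<phi> * r) / (2 * \<Delta> * ?g)) * r"
    unfolding Fpi_integrand_def ..
  have "0 \<le> ?e * (\<phi>\<^sup>2 * exp (- \<phi> * r) / (2 * \<Delta> * ?g)) * r"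
    using e d assms by (intro mult_nonneg_nonneg) auto
  moreover have "?e * (\<phi>\<^sup>2 * exp (- \<phi> * r) / (2 * \<Delta> * ?g)) * r \<le> 1 * (\<phi>\<^sup>2 / (2 * \<Delta> * ?g)) * RD"
    using e d assms by (intro mult_mono) auto
  ultimately show ?thesis
    unfolding eq mult_1_left by blast
qed

lemma Fpi_inner_integral:
  fixes M :: nat and \<alpha> \<theta>b :: real
  assumes "y \<ge> 0" "\<phi> > 0" "\<Delta> > 0" "RD > 0"
  defines "J \<equiv> \<lambda>\<theta>. LBINT r=0..RD. Fpi_integrand M \<alpha> \<phi> RD \<Delta> \<theta>b y \<theta> r"
  shows "(\<integral>\<^sup>+r. ennreal (indicator {0..RD} r * Fpi_integrand M \<alpha> \<phi> RD \<Delta> \<theta>b y \<theta> r) \<partial>lborel) = ennreal (J \<theta>)"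
    and "0 \<le> J \<theta>"
    and "J \<theta> \<le> \<phi>\<^sup>2 / (2 * \<Delta> * lower_gamma 2 (RD * \<phi>)) * RD * RD"
    and "J \<in> borel_measurable borel"
proof -
  let ?C = "\<phi>\<^sup>2 / (2 * \<Delta> * lower_gamma 2 (RD * \<phi>)) * RD"
  show inner: "(\<integral>\<^sup>+r. ennreal (indicator {0..RD} r * Fpi_integrand M \<alpha> \<phi> RD \<Delta> \<theta>b y \<theta> r) \<partial>lborel) = ennreal (J \<theta>)"
    and "0 \<le> J \<theta>" for \<theta>
    unfolding J_def zero_ereal_def
    using Fpi_integrand_bounds[OF assms(1-4)] \<open>RD > 0\<close>
    by (intro nn_integral_eq_interval_integral_bounded[where C = ?C]; simp)+
  have "ennreal (J \<theta>) \<le> (\<integral>\<^sup>+r. ennreal ?C * indicator {0..RD} r \<partial>lborel)"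
    unfolding inner[symmetric] using Fpi_integrand_bounds[OF assms(1-4)]
    by (intro nn_integral_mono) (auto simp: indicator_def intro: ennreal_leI)
  also have "\<dots> = ennreal ?C * ennreal RD"
    using \<open>RD > 0\<close> by (simp add: nn_integral_cmult_indicator)
  also have "\<dots> = ennreal (?C * RD)"
    by (rule ennreal_mult''[symmetric]) (use \<open>RD > 0\<close> in simp)
  finally have "ennreal (J \<theta>) \<le> ennreal (?C * RD)" .
  moreover have "0 \<le> ?C * RD"
    using lower_gamma_2_pos[of "RD * \<phi>"] assms by simp
  ultimately show "J \<theta> \<le> ?C * RD"
    by (simp add: ennreal_le_iff)
  have "J = (\<lambda>\<theta>. \<integral>r. indicator {0..RD} r * Fpi_integrand M \<alpha> \<phi> RD \<Delta> \<theta>b y \<theta> r \<partial>lborel)"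
    unfolding J_def zero_ereal_def using \<open>RD > 0\<close>
    by (simp add: interval_integral_Icc set_lebesgue_integral_def)
  also have "\<dots> \<in> borel_measurable lborel"
    by (rule lborel.borel_measurable_lebesgue_integral) measurable
  finally show "J \<in> borel_measurable borel"
    by simp
qed

lemma nn_integral_Fpi_integrand:
  assumes "y \<ge> 0" "\<phi> > 0" "\<Delta> > 0" "RD > 0"
  shows "(\<integral>\<^sup>+\<theta>. \<integral>\<^sup>+r. ennreal (indicator {\<theta>b-\<Delta>..\<theta>b+\<Delta>} \<theta> * indicator {0..RD} r
            * Fpi_integrand M \<alpha> \<phi> RD \<Delta> \<theta>b y \<theta> r) \<partial>lborel \<partial>lborel)
       = ennreal (Fpi M \<alpha> \<phi> RD \<Delta> \<theta>b y)"
    and "0 \<le> Fpi M \<alpha> \<phi> RD \<Delta> \<theta>b y"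
proof -
  define J where "J \<theta> = (LBINT r=0..RD. Fpi_integrand M \<alpha> \<phi> RD \<Delta> \<theta>b y \<theta> r)" for \<theta>
  note J = Fpi_inner_integral[OF assms, where M = M and \<alpha> = \<alpha> and \<theta>b = \<theta>b, folded J_def]
  have "(\<integral>\<^sup>+\<theta>. \<integral>\<^sup>+r. ennreal (indicator {\<theta>b-\<Delta>..\<theta>b+\<Delta>} \<theta> * indicator {0..RD} r
            * Fpi_integrand M \<alpha> \<phi> RD \<Delta> \<theta>b y \<theta> r) \<partial>lborel \<partial>lborel)
      = (\<integral>\<^sup>+\<theta>. ennreal (indicator {\<theta>b-\<Delta>..\<theta>b+\<Delta>} \<theta> * J \<theta>) \<partial>lborel)"
    by (intro nn_integral_cong) (simp add: J(1)[symmetric] indicator_def)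
  moreover have "(\<integral>\<^sup>+\<theta>. ennreal (indicator {\<theta>b-\<Delta>..\<theta>b+\<Delta>} \<theta> * J \<theta>) \<partial>lborel)
      = ennreal (LBINT \<theta>=\<theta>b-\<Delta>..\<theta>b+\<Delta>. J \<theta>)"
    and "0 \<le> (LBINT \<theta>=\<theta>b-\<Delta>..\<theta>b+\<Delta>. J \<theta>)"
    using J(2-4) \<open>\<Delta> > 0\<close>
    by (intro nn_integral_eq_interval_integral_bounded
        [where C = "\<phi>\<^sup>2 / (2 * \<Delta> * lower_gamma 2 (RD * \<phi>)) * RD * RD"]; simp)+
  moreover have "Fpi M \<alpha> \<phi> RD \<Delta> \<theta>b y = (LBINT \<theta>=\<theta>b-\<Delta>..\<theta>b+\<Delta>. J \<theta>)"
    unfolding Fpi_def J_def Fpi_integrand_def ..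
  ultimately show "(\<integral>\<^sup>+\<theta>. \<integral>\<^sup>+r. ennreal (indicator {\<theta>b-\<Delta>..\<theta>b+\<Delta>} \<theta> * indicator {0..RD} r
            * Fpi_integrand M \<alpha> \<phi> RD \<Delta> \<theta>b y \<theta> r) \<partial>lborel \<partial>lborel)
       = ennreal (Fpi M \<alpha> \<phi> RD \<Delta> \<theta>b y)"
    and "0 \<le> Fpi M \<alpha> \<phi> RD \<Delta> \<theta>b y"
    by simp_all
qed

lemma nn_integral_user_density_gain:
  assumes "M \<ge> 1" "\<phi> > 0" "RD > 0" "\<Delta> > 0" "y \<ge> 0"
    and A: "A \<in> sets borel" "{..<y} \<subseteq> A" "A \<subseteq> {..y}"
    and fejer_ne: "fejer M (pi * (\<theta>b - \<theta>)) \<noteq> 0"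
  shows "(\<integral>\<^sup>+z. user_density \<phi> RD \<Delta> \<theta>b (r, \<theta>, z) * indicator {z. gain M \<alpha> \<theta>b r \<theta> z \<in> A} z \<partial>lborel)
       = ennreal (indicator {\<theta>b-\<Delta>..\<theta>b+\<Delta>} \<theta> * indicator {0..RD} r * Fpi_integrand M \<alpha> \<phi> RD \<Delta> \<theta>b y \<theta> r)"
proof (cases "r \<in> {0..RD} \<and> \<theta> \<in> {\<theta>b-\<Delta>..\<theta>b+\<Delta>}")
  case True
  define dens where "dens = \<phi>\<^sup>2 * exp (- \<phi> * r) * r / (2 * \<Delta> * lower_gamma 2 (RD * \<phi>))"
  define c where "c = fejer M (pi * (\<theta>b - \<theta>)) / (1 + r powr \<alpha>)"
  have "dens \<ge> 0"
    unfolding dens_def using True assms lower_gamma_2_pos[of "RD * \<phi>"] by simp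
  have "1 + r powr \<alpha> > 0"
    by (simp add: add_pos_nonneg)
  then have "c > 0"
    unfolding c_def using fejer_ne fejer_nonneg[of M] by (simp add: order_less_le)
  have density: "user_density \<phi> RD \<Delta> \<theta>b (r, \<theta>, z) = ennreal dens * ennreal (exp (- (cmod z)\<^sup>2) / pi)" for z
    unfolding user_density_def dens_def using True \<open>dens \<ge> 0\<close>
    by (simp add: ennreal_mult[symmetric] dens_def mult_ac)
  have gain: "gain M \<alpha> \<theta>b r \<theta> z = (cmod z)\<^sup>2 * c" for z
    unfolding c_def gain_eq_fejer[OF \<open>M \<ge> 1\<close>] by simp
  have "(\<integral>\<^sup>+z. user_density \<phi> RD \<Delta> \<theta>b (r, \<theta>, z) * indicator {z. gain M \<alpha> \<theta>b r \<theta> z \<in> A} z \<partial>lborel)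
      = ennreal dens * (\<integral>\<^sup>+z. ennreal (exp (- (cmod z)\<^sup>2) / pi) * indicator {z. (cmod z)\<^sup>2 * c \<in> A} z \<partial>lborel)"
    unfolding density gain using A(1) by (subst nn_integral_cmult[symmetric]) (auto simp: mult.assoc)
  also have "\<dots> = ennreal (dens * (1 - exp (- (y / c))))"
    using nn_integral_cn_density_norm_sq_scaled[OF \<open>c > 0\<close> \<open>y \<ge> 0\<close> A(2,3)] \<open>dens \<ge> 0\<close>
      \<open>c > 0\<close> \<open>y \<ge> 0\<close>
    by (simp add: ennreal_mult)
  also have "- (y / c) = - (y * (1 + r powr \<alpha>)) / fejer M (pi * (\<theta>b - \<theta>))"
    unfolding c_def using fejer_ne by (simp add: field_simps)
  also have "dens * (1 - exp (- (y * (1 + r powr \<alpha>)) / fejer M (pi * (\<theta>b - \<theta>))))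
      = Fpi_integrand M \<alpha> \<phi> RD \<Delta> \<theta>b y \<theta> r"
    unfolding Fpi_integrand_def dens_def by (simp add: field_simps)
  finally show ?thesis
    using True by simp
next
  case False
  then show ?thesis
    by (auto simp: user_density_def indicator_def)
qed

lemma nn_integral_lborel_reorder:
  fixes H :: "real \<times> real \<times> complex \<Rightarrow> ennreal"
  assumes [measurable]: "H \<in> borel_measurable (lborel \<Otimes>\<^sub>M lborel \<Otimes>\<^sub>M lborel)"
  shows "(\<integral>\<^sup>+v. H v \<partial>(lborel \<Otimes>\<^sub>M lborel \<Otimes>\<^sub>M lborel))
       = (\<integral>\<^sup>+\<theta>. \<integral>\<^sup>+r. \<integral>\<^sup>+z. H (r, \<theta>, z) \<partial>lborel \<partial>lborel \<partial>lborel)"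
proof -
  have sigma_finite: "sigma_finite_measure ((lborel::real measure) \<Otimes>\<^sub>M (lborel::complex measure))"
    by (intro sigma_finite_pair_measure lborel.sigma_finite_measure_axioms)
  have "(\<integral>\<^sup>+v. H v \<partial>(lborel \<Otimes>\<^sub>M lborel \<Otimes>\<^sub>M lborel))
      = (\<integral>\<^sup>+r. \<integral>\<^sup>+w. H (r, w) \<partial>(lborel \<Otimes>\<^sub>M lborel) \<partial>lborel)"
    by (rule sigma_finite_measure.nn_integral_fst[OF sigma_finite, symmetric]) measurable
  also have "\<dots> = (\<integral>\<^sup>+r. \<integral>\<^sup>+\<theta>. \<integral>\<^sup>+z. H (r, \<theta>, z) \<partial>lborel \<partial>lborel \<partial>lborel)"
    by (intro nn_integral_cong lborel.nn_integral_fst[symmetric]) measurable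
  also have "\<dots> = (\<integral>\<^sup>+\<theta>. \<integral>\<^sup>+r. \<integral>\<^sup>+z. H (r, \<theta>, z) \<partial>lborel \<partial>lborel \<partial>lborel)"
  proof (rule lborel_pair.Fubini')
    have "(\<lambda>(p, z). H (snd p, fst p, z)) \<in> borel_measurable ((lborel \<Otimes>\<^sub>M lborel) \<Otimes>\<^sub>M (lborel::complex measure))"
      by measurable
    from lborel.borel_measurable_nn_integral_fst[OF this]
    show "(\<lambda>(\<theta>, r). \<integral>\<^sup>+z. H (r, \<theta>, z) \<partial>lborel) \<in> borel_measurable (lborel \<Otimes>\<^sub>M lborel)"
      by (simp add: case_prod_beta')
  qed
  finally show ?thesis .
qed

text \<open>At the excluded angles the gain vanishes identically and \<open>Fpi_integrand\<close> divides by zero.\<close>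
lemma AE_fejer_ne_zero:
  assumes "M \<ge> 1"
  shows "AE \<theta> in lborel. fejer M (pi * (\<theta>b - \<theta>)) \<noteq> 0"
proof -
  have "countable ((\<lambda>x. \<theta>b - x / pi) ` {x. fejer M x = 0})"
    using countable_fejer_zeros[OF assms] by simp
  moreover have "{\<theta>. fejer M (pi * (\<theta>b - \<theta>)) = 0} \<subseteq> (\<lambda>x. \<theta>b - x / pi) ` {x. fejer M x = 0}"
    by (auto intro!: image_eqI[where x = "pi * (\<theta>b - _)"])
  ultimately show ?thesis
    by (auto intro!: AE_I'[OF countable_imp_null_set_lborel] dest: countable_subset)
qed

lemma measure_gain_in:
  fixes \<Omega> :: "'w measure" and r \<theta> :: "'w \<Rightarrow> real" and a :: "'w \<Rightarrow> complex"
  assumes distr: "distributed \<Omega> (lborel \<Otimes>\<^sub>M lborel \<Otimes>\<^sub>M lborel) (\<lambda>\<omega>. (r \<omega>, \<theta> \<omega>, a \<omega>)) (user_density \<phi> RD \<Delta> \<theta>b)"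
    and "M \<ge> 1" "\<phi> > 0" "RD > 0" "\<Delta> > 0" "y \<ge> 0"
    and A: "A \<in> sets borel" "{..<y} \<subseteq> A" "A \<subseteq> {..y}"
  shows "measure \<Omega> {\<omega> \<in> space \<Omega>. gain M \<alpha> \<theta>b (r \<omega>) (\<theta> \<omega>) (a \<omega>) \<in> A} = Fpi M \<alpha> \<phi> RD \<Delta> \<theta>b y"
proof -
  let ?N = "lborel \<Otimes>\<^sub>M lborel \<Otimes>\<^sub>M (lborel :: complex measure) :: (real \<times> real \<times> complex) measure"
  let ?f = "user_density \<phi> RD \<Delta> \<theta>b"
  define S where "S = {(r, \<theta>, z). gain M \<alpha> \<theta>b r \<theta> z \<in> A}"
  have S: "S \<in> sets ?N"
    using measurable_sets[OF gain_measurable[OF \<open>M \<ge> 1\<close>] A(1)]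
    unfolding S_def by (simp add: space_pair_measure vimage_def case_prod_beta')
  have density_measurable: "?f \<in> borel_measurable ?N"
    unfolding user_density_def by measurable
  have inner: "AE \<theta> in lborel. (\<integral>\<^sup>+r. \<integral>\<^sup>+z. ?f (r, \<theta>, z) * indicator S (r, \<theta>, z) \<partial>lborel \<partial>lborel)
      = (\<integral>\<^sup>+r. ennreal (indicator {\<theta>b-\<Delta>..\<theta>b+\<Delta>} \<theta> * indicator {0..RD} r
            * Fpi_integrand M \<alpha> \<phi> RD \<Delta> \<theta>b y \<theta> r) \<partial>lborel)"
    using AE_fejer_ne_zero[OF \<open>M \<ge> 1\<close>, of \<theta>b]
  proof (elim eventually_mono)
    fix \<theta> assume "fejer M (pi * (\<theta>b - \<theta>)) \<noteq> 0"
    moreover have "(indicator S (r, \<theta>, z) :: ennreal) = indicator {z. gain M \<alpha> \<theta>b r \<theta> z \<in> A} z" for r z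
      unfolding S_def by (simp add: indicator_def)
    ultimately show "(\<integral>\<^sup>+r. \<integral>\<^sup>+z. ?f (r, \<theta>, z) * indicator S (r, \<theta>, z) \<partial>lborel \<partial>lborel)
      = (\<integral>\<^sup>+r. ennreal (indicator {\<theta>b-\<Delta>..\<theta>b+\<Delta>} \<theta> * indicator {0..RD} r
            * Fpi_integrand M \<alpha> \<phi> RD \<Delta> \<theta>b y \<theta> r) \<partial>lborel)"
      using nn_integral_user_density_gain[OF assms(2-6) A] by simp
  qed
  have "emeasure \<Omega> {\<omega> \<in> space \<Omega>. gain M \<alpha> \<theta>b (r \<omega>) (\<theta> \<omega>) (a \<omega>) \<in> A}
      = emeasure \<Omega> ((\<lambda>\<omega>. (r \<omega>, \<theta> \<omega>, a \<omega>)) -` S \<inter> space \<Omega>)"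
    unfolding S_def by (intro arg_cong[where f = "emeasure \<Omega>"]) auto
  also have "\<dots> = (\<integral>\<^sup>+v. ?f v * indicator S v \<partial>?N)"
    by (rule distributed_emeasure[OF distr S])
  also have "\<dots> = (\<integral>\<^sup>+\<theta>. \<integral>\<^sup>+r. \<integral>\<^sup>+z. ?f (r, \<theta>, z) * indicator S (r, \<theta>, z) \<partial>lborel \<partial>lborel \<partial>lborel)"
    using density_measurable borel_measurable_indicator[OF S]
    by (intro nn_integral_lborel_reorder borel_measurable_times_ennreal)
  also have "\<dots> = ennreal (Fpi M \<alpha> \<phi> RD \<Delta> \<theta>b y)"
    using nn_integral_cong_AE[OF inner] nn_integral_Fpi_integrand(1) assms by simp
  finally show ?thesis
    unfolding measure_def using nn_integral_Fpi_integrand(2) assms by simp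
qed

lemma ordered_gain_nonneg:
  assumes "1 \<le> k" "k \<le> K"
  shows "0 \<le> ord_stat K (\<lambda>l. gain M \<alpha> \<theta>b (r l) (\<theta> l) (a l)) k"
  using ord_stat_in_image[OF assms, of "\<lambda>l. gain M \<alpha> \<theta>b (r l) (\<theta> l) (a l)"] by (auto simp: gain_def)

lemma ordered_gain_cdf:
  fixes \<Omega> :: "'w measure" and r \<theta> :: "nat \<Rightarrow> 'w \<Rightarrow> real" and a :: "nat \<Rightarrow> 'w \<Rightarrow> complex"
  assumes "prob_space \<Omega>"
    and indep: "prob_space.indep_vars \<Omega> (\<lambda>_. lborel \<Otimes>\<^sub>M lborel \<Otimes>\<^sub>M lborel)
                  (\<lambda>k \<omega>. (r k \<omega>, \<theta> k \<omega>, a k \<omega>)) {..<K}"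
    and distr: "\<And>k. k < K \<Longrightarrow> distributed \<Omega> (lborel \<Otimes>\<^sub>M lborel \<Otimes>\<^sub>M lborel)
                  (\<lambda>\<omega>. (r k \<omega>, \<theta> k \<omega>, a k \<omega>)) (user_density \<phi> RD \<Delta> \<theta>b)"
    and "M \<ge> 1" "\<phi> > 0" "RD > 0" "\<Delta> > 0"
    and G: "G = (\<lambda>k \<omega>. ord_stat K (\<lambda>l. gain M \<alpha> \<theta>b (r l \<omega>) (\<theta> l \<omega>) (a l \<omega>)) k)"
    and "y \<ge> 0" "A = {..y} \<or> A = {..<y}" and k: "1 \<le> k" "k \<le> K"
  shows "measure \<Omega> {\<omega> \<in> space \<Omega>. G k \<omega> \<in> A} = order_cdf_sum K k (Fpi M \<alpha> \<phi> RD \<Delta> \<theta>b y)"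
    and "{\<omega> \<in> space \<Omega>. G k \<omega> \<in> A} \<in> sets \<Omega>"
proof -
  interpret prob_space \<Omega>
    by fact
  define X where "X l \<omega> = gain M \<alpha> \<theta>b (r l \<omega>) (\<theta> l \<omega>) (a l \<omega>)" for l \<omega>
  have "indep_vars (\<lambda>_. borel) (\<lambda>l \<omega>. (\<lambda>(r, \<theta>, z). gain M \<alpha> \<theta>b r \<theta> z) (r l \<omega>, \<theta> l \<omega>, a l \<omega>)) {..<K}"
    using gain_measurable[OF \<open>M \<ge> 1\<close>] by (intro indep_vars_compose2[OF indep]) simp
  then have ind: "indep_vars (\<lambda>_. borel) X {..<K}"
    unfolding X_def by simp
  have A: "A \<in> sets borel" "{..<y} \<subseteq> A" "A \<subseteq> {..y}"
    using \<open>A = {..y} \<or> A = {..<y}\<close> by auto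
  have down: "x \<in> A" if "x \<le> x'" "x' \<in> A" for x x'
    using that \<open>A = {..y} \<or> A = {..<y}\<close> by auto
  have p: "prob {\<omega> \<in> space \<Omega>. X l \<omega> \<in> A} = Fpi M \<alpha> \<phi> RD \<Delta> \<theta>b y" if "l < K" for l
    unfolding X_def using assms A by (intro measure_gain_in[OF distr[OF that]]) auto
  show "measure \<Omega> {\<omega> \<in> space \<Omega>. G k \<omega> \<in> A} = order_cdf_sum K k (Fpi M \<alpha> \<phi> RD \<Delta> \<theta>b y)"
    using prob_ord_stat_in_down_closed(1)[OF ind A(1) down p k] unfolding G X_def .
  show "{\<omega> \<in> space \<Omega>. G k \<omega> \<in> A} \<in> sets \<Omega>"
    using prob_ord_stat_in_down_closed(2)[OF ind A(1) down p k] unfolding G X_def .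
qed

lemma sic_success_iff:
  fixes g \<rho> \<beta>i \<beta>j \<epsilon>i \<epsilon>j :: real
  assumes "g \<ge> 0" "\<rho> > 0" "\<beta>j > 0" "\<epsilon>i > 0"
  shows "(g * \<beta>i\<^sup>2 / (g * \<beta>j\<^sup>2 + 1 / \<rho>) > \<epsilon>i \<and> \<rho> * g * \<beta>j\<^sup>2 > \<epsilon>j)
     \<longleftrightarrow> \<beta>i\<^sup>2 > \<beta>j\<^sup>2 * \<epsilon>i \<and> g > max ((\<epsilon>i / \<rho>) / (\<beta>i\<^sup>2 - \<beta>j\<^sup>2 * \<epsilon>i)) (\<epsilon>j / (\<rho> * \<beta>j\<^sup>2))"
proof -
  have "g * \<beta>j\<^sup>2 + 1 / \<rho> > 0"
    using assms by (simp add: add_nonneg_pos)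
  then have sinr: "g * \<beta>i\<^sup>2 / (g * \<beta>j\<^sup>2 + 1 / \<rho>) > \<epsilon>i \<longleftrightarrow> g * (\<beta>i\<^sup>2 - \<beta>j\<^sup>2 * \<epsilon>i) > \<epsilon>i / \<rho>"
    using assms by (simp add: field_simps)
  have snr: "\<rho> * g * \<beta>j\<^sup>2 > \<epsilon>j \<longleftrightarrow> g > \<epsilon>j / (\<rho> * \<beta>j\<^sup>2)"
    using assms by (simp add: field_simps)
  show ?thesis
  proof (cases "\<beta>i\<^sup>2 > \<beta>j\<^sup>2 * \<epsilon>i")
    case True
    then show ?thesis
      unfolding sinr snr using assms by (simp add: field_simps)
  next
    case False
    then have "g * (\<beta>i\<^sup>2 - \<beta>j\<^sup>2 * \<epsilon>i) \<le> 0" "\<epsilon>i / \<rho> > 0"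
      using assms by (simp_all add: mult_nonneg_nonpos)
    then show ?thesis
      unfolding sinr using False by auto
  qed
qed

lemma sinr_less_iff:
  fixes g \<rho> \<beta>i \<beta>j \<epsilon>i :: real
  assumes "g \<ge> 0" "\<rho> > 0" "\<beta>i\<^sup>2 > \<beta>j\<^sup>2 * \<epsilon>i"
  shows "g * \<beta>i\<^sup>2 / (g * \<beta>j\<^sup>2 + 1 / \<rho>) < \<epsilon>i \<longleftrightarrow> g < (\<epsilon>i / \<rho>) / (\<beta>i\<^sup>2 - \<beta>j\<^sup>2 * \<epsilon>i)"
proof -
  have "g * \<beta>j\<^sup>2 + 1 / \<rho> > 0"
    using assms by (simp add: add_nonneg_pos)
  then show ?thesis
    using assms by (simp add: field_simps)
qed

theorem corollary1:
  fixes \<Omega> :: "'w measure"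
    and r \<theta> :: "nat \<Rightarrow> 'w \<Rightarrow> real" and a :: "nat \<Rightarrow> 'w \<Rightarrow> complex"
    and M K i j :: nat
    and G :: "nat \<Rightarrow> 'w \<Rightarrow> real" and F :: "real \<Rightarrow> real"
    and \<alpha> \<phi> RD \<Delta> \<theta>b \<beta>i \<beta>j \<rho> Ri Rj \<epsilon>i \<epsilon>j Poi Poj :: real
  assumes "prob_space \<Omega>"
    and "M \<ge> 1" and "\<alpha> > 0" and "\<phi> > 0" and "RD > 0" and "\<Delta> > 0"
    and "K \<ge> 2" and "1 \<le> i" and "i < j" and "j \<le> K"
    and indep: "prob_space.indep_vars \<Omega> (\<lambda>_. lborel \<Otimes>\<^sub>M lborel \<Otimes>\<^sub>M lborel)
                   (\<lambda>k \<omega>. (r k \<omega>, \<theta> k \<omega>, a k \<omega>)) {..<K}"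
    and distr: "\<And>k. k < K \<Longrightarrow> distributed \<Omega> (lborel \<Otimes>\<^sub>M lborel \<Otimes>\<^sub>M lborel)
                   (\<lambda>\<omega>. (r k \<omega>, \<theta> k \<omega>, a k \<omega>)) (user_density \<phi> RD \<Delta> \<theta>b)"
    and "\<beta>i \<ge> \<beta>j" and "\<beta>j > 0" and "\<beta>i\<^sup>2 + \<beta>j\<^sup>2 = 1"
    and "\<rho> > 0" and "Ri > 0" and "Rj > 0"
    and "\<epsilon>i = 2 powr Ri - 1" and "\<epsilon>j = 2 powr Rj - 1"
    and "G =  (\<lambda>k \<omega>. ord_stat K (\<lambda>l. gain M \<alpha> \<theta>b (r l \<omega>) (\<theta> l \<omega>) (a l \<omega>)) k)"
    and "Poi = measure \<Omega> {\<omega> \<in> space \<Omega>.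
                 G i \<omega> * \<beta>i\<^sup>2 / (G i \<omega> * \<beta>j\<^sup>2 + 1 / \<rho>) < \<epsilon>i}"
    and "Poj = 1 - measure \<Omega> {\<omega> \<in> space \<Omega>.
                 G j \<omega> * \<beta>i\<^sup>2 / (G j \<omega> * \<beta>j\<^sup>2 + 1 / \<rho>) > \<epsilon>i
                 \<and> \<rho> * G j \<omega> * \<beta>j\<^sup>2 > \<epsilon>j}"
    and "F = Fpi M \<alpha> \<phi> RD \<Delta> \<theta>b"
  shows "(\<beta>i\<^sup>2 \<le> \<beta>j\<^sup>2 * \<epsilon>i \<longrightarrow> Poj = 1)
       \<and> (\<beta>i\<^sup>2 > \<beta>j\<^sup>2 * \<epsilon>i \<longrightarrow>
            Poj = order_cdf_sum K j (F (max ((\<epsilon>i / \<rho>) / (\<beta>i\<^sup>2 - \<beta>j\<^sup>2 * \<epsilon>i)) (\<epsilon>j / (\<rho> * \<beta>j\<^sup>2))))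
          \<and> Poi = order_cdf_sum K i (F ((\<epsilon>i / \<rho>) / (\<beta>i\<^sup>2 - \<beta>j\<^sup>2 * \<epsilon>i))))"
proof -
  interpret prob_space \<Omega>
    by fact
  define \<eta>i where "\<eta>i = (\<epsilon>i / \<rho>) / (\<beta>i\<^sup>2 - \<beta>j\<^sup>2 * \<epsilon>i)"
  define \<eta>j where "\<eta>j = max \<eta>i (\<epsilon>j / (\<rho> * \<beta>j\<^sup>2))"
  have "\<epsilon>i > 0" "\<epsilon>j > 0"
    using assms(17-20) by simp_all
  have G_nonneg: "0 \<le> G k \<omega>" if "1 \<le> k" "k \<le> K" for k \<omega>
    unfolding assms(21) by (rule ordered_gain_nonneg[OF that])
  note cdf = ordered_gain_cdf[OF assms(1) indep distr assms(2,4-6,21), folded assms(24)]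
  have success: "{\<omega> \<in> space \<Omega>. G j \<omega> * \<beta>i\<^sup>2 / (G j \<omega> * \<beta>j\<^sup>2 + 1 / \<rho>) > \<epsilon>i \<and> \<rho> * G j \<omega> * \<beta>j\<^sup>2 > \<epsilon>j}
      = {\<omega> \<in> space \<Omega>. \<beta>i\<^sup>2 > \<beta>j\<^sup>2 * \<epsilon>i \<and> G j \<omega> \<notin> {..\<eta>j}}"
    using sic_success_iff[OF G_nonneg \<open>\<rho> > 0\<close> \<open>\<beta>j > 0\<close> \<open>\<epsilon>i > 0\<close>] assms(8-10)
    unfolding \<eta>j_def \<eta>i_def by (auto simp: not_le)
  show ?thesis
  proof (intro conjI impI)
    assume "\<beta>i\<^sup>2 \<le> \<beta>j\<^sup>2 * \<epsilon>i"
    then show "Poj = 1"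
      unfolding assms(23) success by simp
  next
    assume "\<beta>i\<^sup>2 > \<beta>j\<^sup>2 * \<epsilon>i"
    then have "\<eta>i > 0"
      unfolding \<eta>i_def using \<open>\<epsilon>i > 0\<close> \<open>\<rho> > 0\<close> by simp
    then have "\<eta>j > 0"
      unfolding \<eta>j_def by simp
    have "Poj = 1 - prob (space \<Omega> - {\<omega> \<in> space \<Omega>. G j \<omega> \<in> {..\<eta>j}})"
      unfolding assms(23) success using \<open>\<beta>i\<^sup>2 > \<beta>j\<^sup>2 * \<epsilon>i\<close>
      by (intro arg_cong[where f = "\<lambda>A. 1 - prob A"]) auto
    also have "\<dots> = order_cdf_sum K j (F \<eta>j)"
      using cdf[of \<eta>j "{..\<eta>j}" j] \<open>\<eta>j > 0\<close> assms(8-10) by (auto simp: prob_compl)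
    finally show "Poj = order_cdf_sum K j (F (max ((\<epsilon>i / \<rho>) / (\<beta>i\<^sup>2 - \<beta>j\<^sup>2 * \<epsilon>i)) (\<epsilon>j / (\<rho> * \<beta>j\<^sup>2))))"
      unfolding \<eta>j_def \<eta>i_def .
    have "Poi = prob {\<omega> \<in> space \<Omega>. G i \<omega> \<in> {..<\<eta>i}}"
      unfolding assms(22) \<eta>i_def
      using sinr_less_iff[OF G_nonneg \<open>\<rho> > 0\<close> \<open>\<beta>i\<^sup>2 > \<beta>j\<^sup>2 * \<epsilon>i\<close>] assms(8-10) by simp
    also have "\<dots> = order_cdf_sum K i (F \<eta>i)"
      using cdf[of \<eta>i "{..<\<eta>i}" i] \<open>\<eta>i > 0\<close> assms(8-10) by simp
    finally show "Poi = order_cdf_sum K i (F ((\<epsilon>i / \<rho>) / (\<beta>i\<^sup>2 - \<beta>j\<^sup>2 * \<epsilon>i)))"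
      unfolding \<eta>i_def .
  qed
qed

end
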